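(* Let $k$ be an algebraically closed field and let $A$ be a finite dimensional $k$-algebra. If $A$ does not have a non-trivial grading, then $A$ is a basic algebra.
   Context: A grading on $A$ is a decomposition $A=\bigoplus_{i\in\mathbb{Z}}A_i$ into subspaces with $A_iA_j\subseteq A_{i+j}$ for all $i,j\in\mathbb{Z}$. The trivial grading is $A_0=A$ (all other components zero); a grading is non-trivial if $A_i\neq 0$ for some $i\neq 0$. Here "$A$ has a non-trivial grading" means there is a non-trivial grading on an algebra isomorphic to $A$. *)

theory Defs
  imports Main "HOL-Computational_Algebra.Polynomial"
begin

definition alg_closed_field :: "'k::field itself \<Rightarrow> bool" where
  "alg_closed_field _ \<longleftrightarrow> (\<forall>p :: 'k poly. degree p \<ge> 1 \<longrightarrow> (\<exists>x. poly p x = 0))"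

definition k_algebra :: "('k::field \<Rightarrow> 'a::ring_1 \<Rightarrow> 'a) \<Rightarrow> bool" where
  "k_algebra scale \<longleftrightarrow> vector_space scale \<and>
     (\<forall>c x y. scale c (x * y) = scale c x * y \<and> scale c (x * y) = x * scale c y)"

definition fin_dim_k_algebra :: "('k::field \<Rightarrow> 'a::ring_1 \<Rightarrow> 'a) \<Rightarrow> bool" where
  "fin_dim_k_algebra scale \<longleftrightarrow> k_algebra scale \<and>
     (\<exists>B. finite B \<and> module.span scale B = UNIV)"

definition is_grading :: "('k::field \<Rightarrow> 'a::ring_1 \<Rightarrow> 'a) \<Rightarrow> (int \<Rightarrow> 'a set) \<Rightarrow> bool" where
  "is_grading scale V \<longleftrightarrow>
     (\<forall>i. module.subspace scale (V i)) \<and>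
     (\<forall>i j. \<forall>x\<in>V i. \<forall>y\<in>V j. x * y \<in> V (i + j)) \<and>
     (\<forall>x. \<exists>!f :: int \<Rightarrow> 'a. finite {i. f i \<noteq> 0} \<and> (\<forall>i. f i \<in> V i) \<and>
           x = (\<Sum>i\<in>{i. f i \<noteq> 0}. f i))"

definition has_nontrivial_grading :: "('k::field \<Rightarrow> 'a::ring_1 \<Rightarrow> 'a) \<Rightarrow> bool" where
  "has_nontrivial_grading scale \<longleftrightarrow>
     (\<exists>V. is_grading scale V \<and> (\<exists>i. i \<noteq> 0 \<and> V i \<noteq> {0}))"

definition left_ideal :: "'a::ring_1 set \<Rightarrow> bool" where
  "left_ideal I \<longleftrightarrow> 0 \<in> I \<and> (\<forall>x\<in>I. \<forall>y\<in>I. x + y \<in> I) \<and> (\<forall>a. \<forall>x\<in>I. a * x \<in> I)"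

definition maximal_left_ideal :: "'a::ring_1 set \<Rightarrow> bool" where
  "maximal_left_ideal I \<longleftrightarrow> left_ideal I \<and> I \<noteq> UNIV \<and>
     (\<forall>L. left_ideal L \<and> I \<subseteq> L \<and> L \<noteq> UNIV \<longrightarrow> L = I)"

definition jacobson_radical :: "'a::ring_1 set" where
  "jacobson_radical = \<Inter>{I. maximal_left_ideal I}"

definition k_algebra_hom_to_field :: "('k::field \<Rightarrow> 'a::ring_1 \<Rightarrow> 'a) \<Rightarrow> ('a \<Rightarrow> 'k) \<Rightarrow> bool" where
  "k_algebra_hom_to_field scale \<phi> \<longleftrightarrow>
     (\<forall>x y. \<phi> (x + y) = \<phi> x + \<phi> y) \<and> (\<forall>c x. \<phi> (scale c x) = c * \<phi> x) \<and>
     (\<forall>x y. \<phi> (x * y) = \<phi> x * \<phi> y) \<and> \<phi> 1 = 1"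

(* Basic: A / rad A \<cong> k \<times> ... \<times> k (n copies) as k-algebras, expressed as a surjective
   k-algebra homomorphism A \<rightarrow> k^n (components \<phi> 0, ..., \<phi> (n-1)) with kernel rad A. *)
definition basic_algebra :: "('k::field \<Rightarrow> 'a::ring_1 \<Rightarrow> 'a) \<Rightarrow> bool" where
  "basic_algebra scale \<longleftrightarrow>
     (\<exists>(n::nat) (\<phi> :: nat \<Rightarrow> 'a \<Rightarrow> 'k).
        (\<forall>i<n. k_algebra_hom_to_field scale (\<phi> i)) \<and>
        (\<forall>c :: nat \<Rightarrow> 'k. \<exists>x. \<forall>i<n. \<phi> i x = c i) \<and>
        {x. \<forall>i<n. \<phi> i x = 0} = jacobson_radical)"

end

theory Submission
  imports Defs "HOL-Computational_Algebra.Computational_Algebra"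
begin

text \<open>If \<open>A\<close> has no non-trivial grading then every idempotent \<open>f\<close> is central, since otherwise
  the Peirce decomposition with \<open>fA(1-f)\<close> in degree 1 and \<open>(1-f)Af\<close> in degree -1 is a non-trivial
  grading. Splitting idempotents into orthogonal summands (by induction on \<open>dim eA\<close>) reduces to a
  primitive central idempotent \<open>e\<close>. Over an algebraically closed field, a root of a minimal
  annihilating polynomial of \<open>ey\<close> together with primitivity shows \<open>ey = \<lambda>e + (nilpotent)\<close>; the
  nilpotent elements of \<open>eA\<close> are exactly its non-left-invertible ones and form an ideal, so
  \<open>y \<mapsto> \<lambda>\<close> is a character. The characters of all primitive summands of \<open>1\<close> are jointly
  surjective; their common kernel is a nil left ideal, hence inside the Jacobson radical, and each
  kernel is a maximal left ideal, so the common kernel is the Jacobson radical.\<close>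

lemma nilpotent_power_ge: "(a::'a::ring_1)^m = 0 \<Longrightarrow> m \<le> k \<Longrightarrow> a^k = 0"
  by (metis le_add_diff_inverse mult_zero_left power_add)

lemma geometric_sum_mult_one_minus:
  fixes w :: "'a::ring_1"
  shows "(\<Sum>i<n. w^i) * (1 - w) = 1 - w^n"
proof (induct n)
  case (Suc n)
  have "(\<Sum>i<Suc n. w^i) * (1 - w) = (\<Sum>i<n. w^i) * (1 - w) + w^n * (1 - w)"
    by (simp add: distrib_right)
  also have "\<dots> = 1 - w^n * w"
    using Suc by (simp add: algebra_simps)
  finally show ?case by (simp add: power_commutes)
qed simp

lemma power_Suc_add_orthogonal:
  fixes a b :: "'a::ring_1"
  assumes "a * b = 0" "b * a = 0"
  shows "(a + b)^(Suc n) = a^(Suc n) + b^(Suc n)"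
proof (induct n)
  case (Suc n)
  have "(a + b)^(Suc (Suc n)) = (a + b) * (a^(Suc n) + b^(Suc n))"
    using Suc by (simp only: power_Suc[of "a + b" "Suc n"])
  also have "\<dots> = a^(Suc (Suc n)) + b^(Suc (Suc n)) + a * b * b^n + b * a * a^n"
    by (simp add: algebra_simps)
  finally show ?case using assms by simp
qed simp

lemma idempotent_complement_mult:
  fixes f :: "'a::ring_1"
  assumes "f * f = f"
  shows "f * (f * z) = f * z" "(1 - f) * ((1 - f) * z) = (1 - f) * z"
    "f * ((1 - f) * z) = 0" "(1 - f) * (f * z) = 0"
proof -
  have "(1 - f) * (1 - f) = 1 - f" "f * (1 - f) = 0" "(1 - f) * f = 0"
    using assms by (simp_all add: algebra_simps)
  then show "f * (f * z) = f * z" "(1 - f) * ((1 - f) * z) = (1 - f) * z"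
    "f * ((1 - f) * z) = 0" "(1 - f) * (f * z) = 0"
    using assms by (simp_all add: mult.assoc[symmetric])
qed

lemma bezout_linear_power:
  fixes q :: "'k::field poly"
  assumes "poly q t \<noteq> 0"
  shows "\<exists>a b. a * [:-t, 1:]^m + b * q = 1"
proof -
  define L where "L = [:-t, 1:]"
  define c where "c = poly q t"
  have c0: "c \<noteq> 0" using assms c_def by simp
  have "poly (q - [:c:]) t = 0" by (simp add: c_def)
  then have "L dvd q - [:c:]" unfolding L_def by (simp only: poly_eq_0_iff_dvd)
  then obtain r where r: "q - [:c:] = L * r" by (elim dvdE)
  define s where "s = smult (- inverse c) r"
  have "smult c (1 - L * s) = [:c:] + L * r"
    using c0 by (simp add: s_def smult_diff_right mult_smult_right smult_minus_right smult_add_right)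
  then have q_eq: "q = smult c (1 - L * s)"
    using r by (simp add: algebra_simps)
  define b where "b = smult (inverse c) (\<Sum>i<m. (L * s)^i)"
  have "b * q = 1 - (L * s)^m"
    using c0 one_diff_power_eq[of "L * s" m] by (simp add: b_def q_eq mult.commute)
  then have "s^m * L^m + b * q = 1"
    by (simp add: power_mult_distrib mult.commute)
  then show ?thesis unfolding L_def by blast
qed

lemma left_ideal_eq_UNIV_iff: "left_ideal I \<Longrightarrow> I = UNIV \<longleftrightarrow> 1 \<in> I"
  unfolding left_ideal_def by (metis UNIV_I mult.right_neutral subsetI subset_antisym)

lemma left_ideal_add_left_multiples:
  assumes "left_ideal I"
  shows "left_ideal {i + a * x | i a. i \<in> I}"
proof -
  have I0: "0 \<in> I" and Iadd: "\<And>u v. u \<in> I \<Longrightarrow> v \<in> I \<Longrightarrow> u + v \<in> I"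
    and Imult: "\<And>r u. u \<in> I \<Longrightarrow> r * u \<in> I"
    using assms unfolding left_ideal_def by blast+
  have sum: "(i + a * x) + (j + b * x) = (i + j) + (a + b) * x" for i j a b :: 'a
    by (simp add: algebra_simps)
  have mult: "r * (i + a * x) = r * i + (r * a) * x" for r i a :: 'a
    by (simp add: algebra_simps)
  show ?thesis
    unfolding left_ideal_def
  proof (intro conjI ballI allI)
    show "0 \<in> {i + a * x | i a. i \<in> I}"
      using I0 by (metis (mono_tags, lifting) add_0 mem_Collect_eq mult_zero_left)
  next
    fix u v assume "u \<in> {i + a * x | i a. i \<in> I}" "v \<in> {i + a * x | i a. i \<in> I}"
    then show "u + v \<in> {i + a * x | i a. i \<in> I}"
      using sum Iadd by blast
  next
    fix r u assume "u \<in> {i + a * x | i a. i \<in> I}"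
    then show "r * u \<in> {i + a * x | i a. i \<in> I}"
      using mult Imult by blast
  qed
qed

lemma nil_left_ideal_subset_jacobson_radical:
  fixes K :: "'a::ring_1 set"
  assumes closed: "\<And>a x. x \<in> K \<Longrightarrow> a * x \<in> K"
    and nil: "\<And>x. x \<in> K \<Longrightarrow> \<exists>m. x^m = 0"
  shows "K \<subseteq> jacobson_radical"
proof
  fix x assume x: "x \<in> K"
  show "x \<in> jacobson_radical"
    unfolding jacobson_radical_def
  proof
    fix I :: "'a set" assume "I \<in> {I. maximal_left_ideal I}"
    then have I: "left_ideal I" "I \<noteq> UNIV"
      and maximal: "\<And>L. left_ideal L \<Longrightarrow> I \<subseteq> L \<Longrightarrow> L \<noteq> UNIV \<Longrightarrow> L = I"
      unfolding maximal_left_ideal_def by auto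
    show "x \<in> I"
    proof (rule ccontr)
      assume "x \<notin> I"
      define L where "L = {i + a * x | i a. i \<in> I}"
      have L: "left_ideal L"
        unfolding L_def using I(1) by (rule left_ideal_add_left_multiples)
      have "I \<subseteq> L"
        unfolding L_def by (force intro: exI[of _ 0])
      moreover have "x \<in> L"
        unfolding L_def using I(1) unfolding left_ideal_def by (force intro: exI[of _ 1])
      ultimately have "L = UNIV"
        using maximal[OF L] \<open>x \<notin> I\<close> by blast
      then have "1 \<in> L" by simp
      then obtain i a where i: "i \<in> I" and one: "1 = i + a * x"
        unfolding L_def by blast
      obtain m where "(a * x)^m = 0" using nil closed x by blast
      moreover have "i = 1 - a * x"
        using one by (simp add: eq_diff_eq)
      ultimately have "(\<Sum>j<m. (a * x)^j) * i = 1"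
        using geometric_sum_mult_one_minus[of "a * x" m] by simp
      moreover have "(\<Sum>j<m. (a * x)^j) * i \<in> I"
        using I(1) i unfolding left_ideal_def by blast
      ultimately show False
        using I left_ideal_eq_UNIV_iff[OF I(1)] by simp
    qed
  qed
qed

locale fd_algebra = finite_dimensional_vector_space scale Basis
  for scale :: "'k::field \<Rightarrow> 'a::ring_1 \<Rightarrow> 'a" and Basis :: "'a set" +
  assumes scale_mult_left: "scale c (x * y) = scale c x * y"
    and scale_mult_right: "scale c (x * y) = x * scale c y"

lemma fin_dim_k_algebra_imp_fd_algebra:
  fixes scale :: "'k::field \<Rightarrow> 'a::ring_1 \<Rightarrow> 'a"
  assumes "fin_dim_k_algebra scale"
  obtains Basis where "fd_algebra scale Basis"
proof -
  interpret vector_space scale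
    using assms unfolding fin_dim_k_algebra_def k_algebra_def by blast
  obtain T where T: "finite T" "span T = UNIV"
    using assms unfolding fin_dim_k_algebra_def by blast
  obtain B where B: "independent B" "UNIV \<subseteq> span B"
    using basis_exists[of UNIV] by blast
  have "finite B"
    using independent_span_bound[OF T(1) B(1)] T(2) by blast
  moreover have "scale c (x * y) = scale c x * y" "scale c (x * y) = x * scale c y" for c x y
    using assms unfolding fin_dim_k_algebra_def k_algebra_def by blast+
  ultimately have "fd_algebra scale B"
    using B by unfold_locales auto
  then show ?thesis by (rule that)
qed

context fd_algebra
begin

definition scalar :: "'k \<Rightarrow> 'a" where "scalar c = scale c 1"

lemma scale_eq_scalar_mult: "scale c x = scalar c * x"
  using scale_mult_left[of c 1 x] by (simp add: scalar_def)

lemma scale_eq_mult_scalar: "scale c x = x * scalar c"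
  using scale_mult_right[of c x 1] by (simp add: scalar_def)

lemma scalar_commute: "scalar c * x = x * scalar c"
  using scale_eq_scalar_mult scale_eq_mult_scalar by metis

lemma scalar_add: "scalar (c + d) = scalar c + scalar d"
  by (simp add: scalar_def scale_left_distrib)

lemma scalar_mult: "scalar (c * d) = scalar c * scalar d"
  by (metis scalar_def scale_eq_scalar_mult scale_scale)

lemma scalar_0 [simp]: "scalar 0 = 0"
  by (simp add: scalar_def)

lemma scalar_1 [simp]: "scalar 1 = 1"
  by (simp add: scalar_def)

lemma scalar_minus: "scalar (- c) = - scalar c"
  by (simp add: scalar_def)

lemma scale_mult_scale: "scale a x * scale b y = scale (a * b) (x * y)"
  by (metis scale_mult_left scale_mult_right scale_scale)

lemma scale_power: "(scale c x)^n = scale (c^n) (x^n)"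
  by (induct n) (simp_all add: scalar_def scale_mult_scale)

definition eval_poly :: "'k poly \<Rightarrow> 'a \<Rightarrow> 'a" where
  "eval_poly p y = fold_coeffs (\<lambda>a r. scalar a + y * r) p 0"

lemma eval_poly_0 [simp]: "eval_poly 0 y = 0"
  by (simp add: eval_poly_def)

lemma eval_poly_pCons [simp]: "eval_poly (pCons a p) y = scalar a + y * eval_poly p y"
  by (cases "p = 0 \<and> a = 0") (auto simp add: eval_poly_def)

lemma eval_poly_add [simp]: "eval_poly (p + q) y = eval_poly p y + eval_poly q y"
proof (induction p arbitrary: q)
  case (pCons a p)
  then show ?case
    by (cases q) (simp add: algebra_simps scalar_add)
qed simp

lemma eval_poly_smult [simp]: "eval_poly (smult a p) y = scalar a * eval_poly p y"
  by (induct p) (simp_all add: scalar_mult distrib_left mult.assoc[symmetric] scalar_commute[of a y])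

lemma eval_poly_mult [simp]: "eval_poly (p * q) y = eval_poly p y * eval_poly q y"
  by (induct p) (simp_all add: distrib_right mult.assoc)

lemma eval_poly_minus [simp]: "eval_poly (- p) y = - eval_poly p y"
  by (metis add_eq_0_iff eval_poly_0 eval_poly_add)

lemma eval_poly_diff [simp]: "eval_poly (p - q) y = eval_poly p y - eval_poly q y"
  by (metis diff_conv_add_uminus eval_poly_add eval_poly_minus)

lemma eval_poly_1 [simp]: "eval_poly 1 y = 1"
  by (simp add: one_pCons)

lemma eval_poly_power [simp]: "eval_poly (p ^ n) y = eval_poly p y ^ n"
  by (induct n) auto

lemma eval_poly_monom [simp]: "eval_poly (monom c n) y = scalar c * y ^ n"
  by (simp add: monom_altdef)

lemma eval_poly_sum: "finite S \<Longrightarrow> eval_poly (\<Sum>i\<in>S. f i) y = (\<Sum>i\<in>S. eval_poly (f i) y)"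
  by (induct S rule: finite_induct) auto

lemma eval_poly_commute: "eval_poly p y * eval_poly q y = eval_poly q y * eval_poly p y"
  by (metis mult.commute eval_poly_mult)

lemma exists_annihilating_poly: "\<exists>p. p \<noteq> 0 \<and> eval_poly p y = 0"
proof (cases "inj_on (\<lambda>i. y^i) {..dimension}")
  case False
  then obtain i j where ij: "i \<noteq> j" "y^i = y^j"
    unfolding inj_on_def by auto
  let ?p = "monom (1::'k) i - monom 1 j"
  have "coeff ?p i = 1"
    using ij(1) by (simp only: coeff_diff coeff_monom) simp
  then have "?p \<noteq> 0" by (metis coeff_0 zero_neq_one)
  moreover have "eval_poly ?p y = 0" using ij by simp
  ultimately show ?thesis by blast
next
  case True
  define S where "S = (\<lambda>i. y^i) ` {..dimension}"
  have "card S = Suc dimension"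
    unfolding S_def using True by (simp add: card_image)
  moreover have "independent S \<Longrightarrow> card S \<le> dimension"
    using independent_bound_general dim_subset_UNIV le_trans by blast
  ultimately have "dependent S" by linarith
  then obtain t u where t: "finite t" "t \<subseteq> S" "(\<Sum>v\<in>t. scale (u v) v) = 0"
    and v: "\<exists>v\<in>t. u v \<noteq> 0"
    unfolding dependent_explicit by blast
  define c where "c i = (if y^i \<in> t then u (y^i) else 0)" for i
  define p where "p = (\<Sum>i\<le>dimension. monom (c i) i)"
  have "eval_poly p y = (\<Sum>i\<le>dimension. scale (c i) (y^i))"
    unfolding p_def by (simp add: eval_poly_sum scale_eq_scalar_mult)
  also have "\<dots> = (\<Sum>v\<in>S. scale (if v \<in> t then u v else 0) v)"
    unfolding S_def by (subst sum.reindex[OF True]) (simp add: c_def)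
  also have "\<dots> = (\<Sum>v\<in>t. scale (u v) v)"
    using t by (intro sum.mono_neutral_cong_right) (auto simp: S_def)
  finally have "eval_poly p y = 0" using t by simp
  moreover obtain i where "i \<le> dimension" "y^i \<in> t" "u (y^i) \<noteq> 0"
    using v t unfolding S_def by auto
  then have "coeff p i \<noteq> 0"
    unfolding p_def coeff_sum by (simp add: c_def sum.delta)
  ultimately show ?thesis by (metis coeff_0)
qed

definition peirce :: "'a \<Rightarrow> int \<Rightarrow> 'a \<Rightarrow> 'a" where
  "peirce f i x =
     (if i = 0 then f * x * f + (1 - f) * x * (1 - f)
      else if i = 1 then f * x * (1 - f)
      else if i = -1 then (1 - f) * x * f
      else 0)"

lemma peirce_add: "peirce f i (x + y) = peirce f i x + peirce f i y"
  by (simp add: peirce_def algebra_simps)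

lemma peirce_zero [simp]: "peirce f i 0 = 0"
  by (simp add: peirce_def)

lemma peirce_scale: "peirce f i (scale c x) = scale c (peirce f i x)"
  by (simp add: peirce_def scale_mult_right[symmetric] scale_mult_left[symmetric] scale_right_distrib)

lemma peirce_sum: "finite S \<Longrightarrow> peirce f j (\<Sum>i\<in>S. h i) = (\<Sum>i\<in>S. peirce f j (h i))"
  by (induct S rule: finite_induct) (auto simp: peirce_add)

lemma peirce_peirce:
  assumes "f * f = f"
  shows "peirce f j (peirce f i x) = (if i = j then peirce f i x else 0)"
  using assms idempotent_complement_mult[OF assms]
  by (auto simp: peirce_def algebra_simps)

lemma peirce_mult:
  assumes "f * f = f"
  shows "peirce f (i + j) (peirce f i x * peirce f j y) = peirce f i x * peirce f j y"
  using assms idempotent_complement_mult[OF assms]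
  by (auto simp: peirce_def algebra_simps)

lemma peirce_decomposition: "peirce f (-1) x + peirce f 0 x + peirce f 1 x = x"
proof -
  have "x = (f + (1 - f)) * x * (f + (1 - f))" by simp
  then show ?thesis by (simp add: peirce_def algebra_simps)
qed

lemma peirce_grading:
  assumes f: "f * f = f"
  shows "is_grading scale (\<lambda>i. {x. peirce f i x = x})"
  unfolding is_grading_def
proof (intro conjI allI ballI)
  fix i
  show "subspace {x. peirce f i x = x}"
    unfolding subspace_def by (auto simp: peirce_add peirce_scale)
next
  fix i j x y
  assume "x \<in> {x. peirce f i x = x}" "y \<in> {y. peirce f j y = y}"
  then show "x * y \<in> {z. peirce f (i + j) z = z}"
    using peirce_mult[OF f, of i j x y] by simp
next
  fix x
  let ?h = "\<lambda>i. peirce f i x"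
  have support: "{i. ?h i \<noteq> 0} \<subseteq> {-1, 0, 1}"
    by (auto simp: peirce_def)
  show "\<exists>!h. finite {i. h i \<noteq> 0} \<and> (\<forall>i. h i \<in> {x. peirce f i x = x}) \<and>
      x = (\<Sum>i\<in>{i. h i \<noteq> 0}. h i)"
  proof (rule ex1I[of _ ?h], intro conjI allI)
    show "finite {i. ?h i \<noteq> 0}"
      using support finite_subset by blast
    show "?h i \<in> {x. peirce f i x = x}" for i
      by (simp add: peirce_peirce[OF f])
    have "(\<Sum>i\<in>{i. ?h i \<noteq> 0}. ?h i) = (\<Sum>i\<in>{-1, 0, 1}. ?h i)"
      by (rule sum.mono_neutral_left) (use support in auto)
    also have "\<dots> = x"
      using peirce_decomposition[of f x] by (simp add: algebra_simps)
    finally show "x = (\<Sum>i\<in>{i. ?h i \<noteq> 0}. ?h i)" by simp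
  next
    fix h
    assume h: "finite {i. h i \<noteq> 0} \<and> (\<forall>i. h i \<in> {x. peirce f i x = x}) \<and>
      x = (\<Sum>i\<in>{i. h i \<noteq> 0}. h i)"
    show "h = ?h"
    proof
      fix j
      have "peirce f j x = (\<Sum>i\<in>{i. h i \<noteq> 0}. peirce f j (peirce f i (h i)))"
        using h peirce_sum by auto
      also have "\<dots> = (\<Sum>i\<in>{i. h i \<noteq> 0}. if i = j then peirce f i (h i) else 0)"
        by (simp only: peirce_peirce[OF f])
      also have "\<dots> = h j"
        using h by (auto simp: sum.delta)
      finally show "h j = peirce f j x" by simp
    qed
  qed
qed

lemma idempotent_central_if_no_nontrivial_grading:
  assumes "\<not> has_nontrivial_grading scale" and f: "f * f = (f::'a)"
  shows "f * x = x * f"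
proof -
  have vanish: "peirce f i x = 0" if "i \<noteq> 0" for i
  proof -
    have "{x. peirce f i x = x} = {0}"
      using assms peirce_grading[OF f] that unfolding has_nontrivial_grading_def by blast
    then show ?thesis
      using peirce_peirce[OF f, of i i x] by auto
  qed
  from vanish[of 1] have "f * x * (1 - f) = 0"
    by (simp add: peirce_def)
  then have "f * x = f * x * f"
    by (simp add: right_diff_distrib)
  moreover from vanish[of "-1"] have "(1 - f) * x * f = 0"
    by (simp add: peirce_def)
  then have "x * f = f * x * f"
    by (simp add: left_diff_distrib)
  ultimately show ?thesis by simp
qed

lemma character_0:
  assumes "k_algebra_hom_to_field scale \<phi>"
  shows "\<phi> 0 = 0"
  using assms unfolding k_algebra_hom_to_field_def by (metis add_0 add_cancel_right_right)

lemma maximal_left_ideal_character_kernel: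
  assumes \<phi>: "k_algebra_hom_to_field scale \<phi>"
  shows "maximal_left_ideal {x. \<phi> x = 0}"
proof -
  have add: "\<phi> (x + y) = \<phi> x + \<phi> y" and mult: "\<phi> (x * y) = \<phi> x * \<phi> y"
    and scale: "\<phi> (scale c x) = c * \<phi> x" and one: "\<phi> 1 = 1" for x y c
    using \<phi> unfolding k_algebra_hom_to_field_def by blast+
  have diff: "\<phi> (x - y) = \<phi> x - \<phi> y" for x y
    using add[of "x - y" y] by (simp add: algebra_simps)
  have ideal: "left_ideal {x. \<phi> x = 0}"
    unfolding left_ideal_def by (simp add: add mult character_0[OF \<phi>])
  have maximal: "L = {x. \<phi> x = 0}"
    if L: "left_ideal L" "{x. \<phi> x = 0} \<subseteq> L" "L \<noteq> UNIV" for L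
  proof (rule ccontr)
    have L_add: "u \<in> L \<Longrightarrow> v \<in> L \<Longrightarrow> u + v \<in> L"
      and L_mult: "u \<in> L \<Longrightarrow> a * u \<in> L" for u v a
      using L(1) unfolding left_ideal_def by blast+
    assume "L \<noteq> {x. \<phi> x = 0}"
    then obtain y where y: "y \<in> L" "\<phi> y \<noteq> 0" using L by blast
    define z where "z = scale (inverse (\<phi> y)) y"
    have "\<phi> (1 - z) = 0"
      using y(2) by (simp add: z_def diff scale one)
    then have "1 - z \<in> L"
      using L(2) by blast
    moreover have "z \<in> L"
      using L_mult[OF y(1)] scale_eq_scalar_mult[of _ y] z_def by metis
    ultimately have "(1 - z) + z \<in> L"
      by (rule L_add)
    then show False
      using L left_ideal_eq_UNIV_iff[OF L(1)] by simp
  qed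
  moreover have "1 \<notin> {x. \<phi> x = 0}"
    using one by simp
  ultimately show ?thesis
    unfolding maximal_left_ideal_def using ideal by blast
qed

text \<open>The corner \<open>eAe\<close> of a central idempotent is basic. For \<open>e = 1\<close> this is \<open>basic_algebra\<close>
  with the Jacobson radical weakened to a nil kernel.\<close>

definition basic_corner :: "'a \<Rightarrow> bool" where
  "basic_corner e \<longleftrightarrow> (\<exists>n (\<phi> :: nat \<Rightarrow> 'a \<Rightarrow> 'k).
     (\<forall>i<n. k_algebra_hom_to_field scale (\<phi> i) \<and> \<phi> i e = 1) \<and>
     (\<forall>c. \<exists>x. \<forall>i<n. \<phi> i x = c i) \<and>
     (\<forall>x. (\<forall>i<n. \<phi> i x = 0) \<longrightarrow> (\<exists>m. (e * x)^m = 0)))"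

end

locale local_corner = fd_algebra scale Basis
  for scale :: "'k::field \<Rightarrow> 'a::ring_1 \<Rightarrow> 'a" and Basis +
  fixes e :: 'a
  assumes alg_closed: "alg_closed_field TYPE('k)"
    and idem: "e * e = e"
    and central: "e * x = x * e"
    and nonzero: "e \<noteq> 0"
    and primitive: "f * f = f \<Longrightarrow> e * f = f \<Longrightarrow> f = 0 \<or> f = e"
begin

lemma e_mult_e_mult: "e * (e * x) = e * x"
  by (metis mult.assoc idem)

lemma corner_mult: "(e * x) * (e * y) = e * (x * y)"
  by (metis central mult.assoc e_mult_e_mult)

lemma corner_power: "(e * x)^(Suc n) = e * x^(Suc n)"
  by (induct n) (simp_all add: corner_mult[of x, symmetric] e_mult_e_mult)

lemma e_left_commute: "e * (x * y) = x * (e * y)"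
  by (metis central mult.assoc)

lemma e_eval_poly_mult: "e * eval_poly (p * q) y = eval_poly p y * (e * eval_poly q y)"
  by (simp add: e_left_commute)

text \<open>A factorisation \<open>PQ\<close> of an annihilator with \<open>AP + BQ = 1\<close> yields the idempotent \<open>e B(y) Q(y)\<close>;
  primitivity of \<open>e\<close> forces it to be \<open>0\<close> or \<open>e\<close>, so one of the factors already annihilates \<open>ey\<close>.\<close>

lemma annihilator_coprime_factor:
  assumes PQ: "e * eval_poly (P * Q) y = 0" and bezout: "A * P + B * Q = 1"
  shows "e * eval_poly P y = 0 \<or> e * eval_poly Q y = 0"
proof -
  define u where "u = e * eval_poly (B * Q) y"
  have "e * eval_poly (A * P + B * Q) y = e"
    using bezout by simp
  then have sum: "e * eval_poly (A * P) y + u = e"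
    by (simp add: u_def distrib_left)
  have "B * Q * (B * Q) = B * Q * (A * P + B * Q) - (A * B) * (P * Q)"
    by (simp add: algebra_simps)
  then have BQ: "B * Q * (B * Q) = B * Q - (A * B) * (P * Q)"
    using bezout by simp
  have "u * u = e * eval_poly (B * Q * (B * Q)) y"
    by (simp only: u_def corner_mult eval_poly_mult)
  also have "\<dots> = u - eval_poly (A * B) y * (e * eval_poly (P * Q) y)"
    by (simp only: BQ eval_poly_diff right_diff_distrib u_def e_eval_poly_mult)
  finally have "u * u = u"
    using PQ by simp
  moreover have "e * u = u"
    by (simp add: u_def e_mult_e_mult)
  ultimately consider "u = 0" | "u = e"
    using primitive by blast
  then show ?thesis
  proof cases
    case 1
    then have "e * eval_poly Q y = e * eval_poly (A * P) y * eval_poly Q y"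
      using sum by simp
    also have "\<dots> = eval_poly A y * (e * eval_poly (P * Q) y)"
      by (simp add: mult.assoc e_left_commute)
    finally show ?thesis using PQ by simp
  next
    case 2
    then have "e * eval_poly P y = u * eval_poly P y"
      by simp
    also have "\<dots> = eval_poly B y * (e * eval_poly (P * Q) y)"
      by (simp add: u_def mult.assoc e_left_commute eval_poly_commute[of Q])
    finally show ?thesis using PQ by simp
  qed
qed

lemma exists_nilpotent_shift: "\<exists>c m. (e * y - scale c e)^m = 0"
proof -
  obtain p0 where "p0 \<noteq> 0" "eval_poly p0 y = 0"
    using exists_annihilating_poly by blast
  then have "\<exists>p. (p \<noteq> 0 \<and> e * eval_poly p y = 0) \<and>
      (\<forall>q. q \<noteq> 0 \<and> e * eval_poly q y = 0 \<longrightarrow> degree p \<le> degree q)"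
    by (intro ex_has_least_nat[where k = p0]) simp
  then obtain p where p: "p \<noteq> 0" "e * eval_poly p y = 0"
    and minimal: "\<And>q. q \<noteq> 0 \<Longrightarrow> e * eval_poly q y = 0 \<Longrightarrow> degree p \<le> degree q"
    by blast
  have "degree p \<noteq> 0"
  proof
    assume "degree p = 0"
    define c where "c = coeff p 0"
    have const: "p = [:c:]"
      unfolding c_def using \<open>degree p = 0\<close> by (rule degree_0_id[symmetric])
    then have "c \<noteq> 0"
      using p(1) by auto
    moreover have "scale c e = e * eval_poly p y"
      using const by (simp add: scale_eq_mult_scalar)
    ultimately show False
      using p(2) nonzero by simp
  qed
  then obtain t where "poly p t = 0"
    using alg_closed unfolding alg_closed_field_def by force
  define m where "m = order t p"
  have "m \<noteq> 0"
    using \<open>poly p t = 0\<close> p(1) order_root m_def by blast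
  obtain q where pq: "p = [:-t, 1:]^m * q" and "\<not> [:-t, 1:] dvd q"
    using order_decomp[OF p(1), of t] unfolding m_def by blast
  then have "poly q t \<noteq> 0"
    by (simp add: poly_eq_0_iff_dvd)
  then obtain a b where "a * [:-t, 1:]^m + b * q = 1"
    using bezout_linear_power by blast
  with p(2) pq have "e * eval_poly ([:-t, 1:]^m) y = 0 \<or> e * eval_poly q y = 0"
    using annihilator_coprime_factor by blast
  moreover have "\<not> e * eval_poly q y = 0"
  proof
    assume "e * eval_poly q y = 0"
    moreover have "q \<noteq> 0" using p(1) pq by auto
    moreover have "degree p = m + degree q"
      using pq \<open>q \<noteq> 0\<close> by (simp add: degree_mult_eq degree_power_eq)
    ultimately show False
      using minimal \<open>m \<noteq> 0\<close> by fastforce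
  qed
  ultimately have "e * (y - scalar t)^m = 0"
    by (simp add: scalar_minus)
  moreover have "e * y - scale t e = e * (y - scalar t)"
    by (simp add: right_diff_distrib scale_eq_scalar_mult scalar_commute)
  ultimately have "(e * y - scale t e)^m = 0"
    using \<open>m \<noteq> 0\<close> corner_power by (metis not0_implies_Suc)
  then show ?thesis by blast
qed

definition corner_nilpotent :: "'a \<Rightarrow> bool" where
  "corner_nilpotent w \<longleftrightarrow> e * w = w \<and> (\<exists>m. w^m = 0)"

definition corner_left_invertible :: "'a \<Rightarrow> bool" where
  "corner_left_invertible x \<longleftrightarrow> (\<exists>v. e * v = v \<and> v * x = e)"

lemma corner_nilpotent_0: "corner_nilpotent 0"
  unfolding corner_nilpotent_def by (auto intro: exI[of _ 1])

lemma corner_nilpotent_scale: "corner_nilpotent w \<Longrightarrow> corner_nilpotent (scale c w)"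
  unfolding corner_nilpotent_def
  by (auto simp: scale_mult_right[symmetric] scale_power intro: exI[of _ "Suc _"])

lemma not_corner_left_invertible:
  assumes "corner_nilpotent w"
  shows "\<not> corner_left_invertible w"
proof
  assume "corner_left_invertible w"
  then obtain v where v: "e * v = v" "v * w = e"
    unfolding corner_left_invertible_def by blast
  obtain m where "w^m = 0"
    using assms unfolding corner_nilpotent_def by blast
  have "v^(Suc k) * e = v^(Suc k)" for k
    using v(1) central by (metis mult.assoc power_Suc2)
  then have inverse_powers: "v^(Suc k) * w^(Suc k) = e" for k
  proof (induct k)
    case (Suc k)
    have "v^(Suc (Suc k)) * w^(Suc (Suc k)) = v^(Suc k) * (v * w) * w^(Suc k)"
      by (simp only: power_Suc2[of v "Suc k"] power_Suc[of w "Suc k"] mult.assoc)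
    also have "\<dots> = v^(Suc k) * w^(Suc k)"
      using v(2) Suc.prems by simp
    finally show ?case using Suc by simp
  qed (simp add: v)
  have "e = 0"
  proof (cases m)
    case 0
    then show ?thesis
      using \<open>w^m = 0\<close> by (metis mult_1_right mult_zero_right power_0)
  next
    case (Suc k)
    then show ?thesis
      using \<open>w^m = 0\<close> inverse_powers[of k] by simp
  qed
  then show False
    using nonzero by contradiction
qed

lemma corner_left_invertible_e_minus:
  assumes "corner_nilpotent w"
  shows "corner_left_invertible (e - w)"
proof -
  obtain m where "w^m = 0" and ew: "e * w = w"
    using assms unfolding corner_nilpotent_def by blast
  define S where "S = (\<Sum>i<m. w^i)"
  have "S * (1 - w) = 1"
    using geometric_sum_mult_one_minus[of w m] \<open>w^m = 0\<close> by (simp add: S_def)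
  moreover have "e - w = e * (1 - w)"
    using ew by (simp add: right_diff_distrib)
  ultimately have "(e * S) * (e - w) = e"
    by (simp add: corner_mult)
  then show ?thesis
    unfolding corner_left_invertible_def by (metis e_mult_e_mult)
qed

lemma corner_left_invertible_shift:
  assumes "a \<noteq> 0" and "corner_nilpotent w"
  shows "corner_left_invertible (scale a e + w)"
proof -
  define w' where "w' = scale (- inverse a) w"
  obtain v where v: "e * v = v" "v * (e - w') = e"
    using corner_left_invertible_e_minus corner_nilpotent_scale assms(2)
    unfolding corner_left_invertible_def w'_def by blast
  have "scale a e + w = scale a (e - w')"
    using assms(1) by (simp add: w'_def scale_right_diff_distrib scale_right_distrib)
  moreover have "scale (inverse a) v * scale a (e - w') = e"
    using assms(1) v(2) by (simp add: scale_mult_scale)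
  moreover have "e * scale (inverse a) v = scale (inverse a) v"
    using v(1) by (simp add: scale_mult_right[symmetric])
  ultimately show ?thesis
    unfolding corner_left_invertible_def by metis
qed

text \<open>\<open>eA\<close> is a local algebra with residue field \<open>k\<close>, and \<open>residue\<close> is its quotient map: \<open>residue y\<close>
  is the unique \<open>\<lambda>\<close> for which \<open>ey - \<lambda>e\<close> is nilpotent.\<close>

definition residue :: "'a \<Rightarrow> 'k" where
  "residue y = (SOME c. corner_nilpotent (e * y - scale c e))"

lemma corner_nilpotent_residue: "corner_nilpotent (e * y - scale (residue y) e)"
proof -
  obtain c m where "(e * y - scale c e)^m = 0"
    using exists_nilpotent_shift by blast
  moreover have "e * (e * y - scale c e) = e * y - scale c e"
    by (simp add: right_diff_distrib e_mult_e_mult scale_mult_right[symmetric] idem)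
  ultimately have "corner_nilpotent (e * y - scale c e)"
    unfolding corner_nilpotent_def by blast
  then show ?thesis
    unfolding residue_def by (rule someI)
qed

lemma residue_unique:
  assumes "corner_nilpotent (e * y - scale c e)"
  shows "residue y = c"
proof (rule ccontr)
  assume "residue y \<noteq> c"
  then have "corner_left_invertible (scale (c - residue y) e + (e * y - scale c e))"
    using corner_left_invertible_shift assms by simp
  then have "corner_left_invertible (e * y - scale (residue y) e)"
    by (simp add: scale_left_diff_distrib algebra_simps)
  then show False
    using not_corner_left_invertible corner_nilpotent_residue by blast
qed

lemma corner_nilpotent_or_left_invertible:
  assumes "e * z = z"
  shows "corner_nilpotent z \<or> corner_left_invertible z"
proof (cases "residue z = 0")
  case True
  then show ?thesis
    using corner_nilpotent_residue[of z] assms by simp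
next
  case False
  then have "corner_left_invertible (scale (residue z) e + (e * z - scale (residue z) e))"
    using corner_left_invertible_shift corner_nilpotent_residue by blast
  then show ?thesis
    using assms by simp
qed

lemma corner_nilpotent_left_mult:
  assumes w: "corner_nilpotent w" and r: "e * r = r"
  shows "corner_nilpotent (r * w)"
proof -
  have "\<not> corner_left_invertible (r * w)"
  proof
    assume "corner_left_invertible (r * w)"
    then obtain v where "e * v = v" "v * (r * w) = e"
      unfolding corner_left_invertible_def by blast
    then have "e * (v * r) = v * r" "(v * r) * w = e"
      by (metis mult.assoc)+
    then show False
      using not_corner_left_invertible[OF w] unfolding corner_left_invertible_def by blast
  qed
  moreover have "e * (r * w) = r * w"
    using r by (metis mult.assoc)
  ultimately show ?thesis
    using corner_nilpotent_or_left_invertible by blast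
qed

lemma corner_nilpotent_add:
  assumes x: "corner_nilpotent x" and y: "corner_nilpotent y"
  shows "corner_nilpotent (x + y)"
proof -
  have "\<not> corner_left_invertible (x + y)"
  proof
    assume "corner_left_invertible (x + y)"
    then obtain u where u: "e * u = u" "u * (x + y) = e"
      unfolding corner_left_invertible_def by blast
    then have "u * y = e - u * x"
      by (simp add: distrib_left algebra_simps)
    then have "corner_left_invertible (u * y)"
      using corner_left_invertible_e_minus corner_nilpotent_left_mult[OF x u(1)] by simp
    then obtain v where "e * v = v" "v * (u * y) = e"
      unfolding corner_left_invertible_def by blast
    then have "e * (v * u) = v * u" "(v * u) * y = e"
      by (metis mult.assoc)+
    then show False
      using not_corner_left_invertible[OF y] unfolding corner_left_invertible_def by blast
  qed
  moreover have "e * (x + y) = x + y"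
    using x y unfolding corner_nilpotent_def by (simp add: distrib_left)
  ultimately show ?thesis
    using corner_nilpotent_or_left_invertible by blast
qed

lemma residue_add: "residue (x + y) = residue x + residue y"
proof (rule residue_unique)
  have "e * (x + y) - scale (residue x + residue y) e =
      (e * x - scale (residue x) e) + (e * y - scale (residue y) e)"
    by (simp add: algebra_simps scale_left_distrib)
  then show "corner_nilpotent (e * (x + y) - scale (residue x + residue y) e)"
    using corner_nilpotent_add corner_nilpotent_residue by simp
qed

lemma residue_scale: "residue (scale c x) = c * residue x"
proof (rule residue_unique)
  have "e * scale c x - scale (c * residue x) e = scale c (e * x - scale (residue x) e)"
    by (simp add: scale_mult_right[symmetric] scale_right_diff_distrib)
  then show "corner_nilpotent (e * scale c x - scale (c * residue x) e)"
    using corner_nilpotent_scale corner_nilpotent_residue by simp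
qed

lemma residue_mult: "residue (x * y) = residue x * residue y"
proof (rule residue_unique)
  define n1 where "n1 = e * x - scale (residue x) e"
  define n2 where "n2 = e * y - scale (residue y) e"
  have n1: "corner_nilpotent n1" and n2: "corner_nilpotent n2"
    unfolding n1_def n2_def by (rule corner_nilpotent_residue)+
  then have en1: "e * n1 = n1" "n1 * e = n1" and en2: "e * n2 = n2"
    using central unfolding corner_nilpotent_def by metis+
  have "e * (x * y) = (e * x) * (e * y)"
    by (simp add: corner_mult)
  also have "\<dots> = (scale (residue x) e + n1) * (scale (residue y) e + n2)"
    by (simp add: n1_def n2_def)
  also have "\<dots> = scale (residue x * residue y) e + (scale (residue x) n2 + scale (residue y) n1 + n1 * n2)"
    by (simp add: algebra_simps scale_mult_scale idem en1 en2
        scale_mult_left[symmetric] scale_mult_right[symmetric])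
  finally have "e * (x * y) - scale (residue x * residue y) e =
      scale (residue x) n2 + scale (residue y) n1 + n1 * n2"
    by simp
  moreover have "corner_nilpotent (n1 * n2)"
    using corner_nilpotent_left_mult[OF n2 en1(1)] .
  ultimately show "corner_nilpotent (e * (x * y) - scale (residue x * residue y) e)"
    using corner_nilpotent_add corner_nilpotent_scale n1 n2 by simp
qed

lemma residue_scale_e: "residue (scale c e) = c"
  by (rule residue_unique) (simp add: scale_mult_right[symmetric] idem corner_nilpotent_0)

lemma residue_one: "residue 1 = 1"
  by (rule residue_unique) (simp add: corner_nilpotent_0)

lemma basic_corner_primitive: "basic_corner e"
  unfolding basic_corner_def
proof (rule exI[of _ 1], rule exI[of _ "\<lambda>_. residue"], intro conjI allI impI)
  show "k_algebra_hom_to_field scale residue"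
    by (simp add: k_algebra_hom_to_field_def residue_add residue_scale residue_mult residue_one)
  show "residue e = 1"
    using residue_scale_e[of 1] by simp
  show "\<exists>x. \<forall>i<1. residue x = c i" for c :: "nat \<Rightarrow> 'k"
    using residue_scale_e by blast
  show "\<exists>m. (e * x)^m = 0" if "\<forall>i<(1::nat). residue x = 0" for x
    using that corner_nilpotent_residue[of x] unfolding corner_nilpotent_def by simp
qed

end

context fd_algebra
begin

lemma character_orthogonal_combination:
  assumes \<phi>: "k_algebra_hom_to_field scale \<phi>" and "\<phi> f = 1" and "f * g = 0"
  shows "\<phi> g = 0" and "\<phi> (f * x + g * y) = \<phi> x"
proof -
  have mult: "\<phi> (a * b) = \<phi> a * \<phi> b" for a b
    using \<phi> unfolding k_algebra_hom_to_field_def by blast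
  show "\<phi> g = 0"
    using mult[of f g] assms character_0[OF \<phi>] by simp
  then show "\<phi> (f * x + g * y) = \<phi> x"
    using \<phi> \<open>\<phi> f = 1\<close> unfolding k_algebra_hom_to_field_def by simp
qed

lemma nilpotent_orthogonal_sum:
  fixes f g x :: 'a
  assumes fg: "f * g = 0" and central: "\<And>x. f * x = x * f" "\<And>x. g * x = x * g"
    and "(f * x)^m1 = 0" "(g * x)^m2 = 0"
  shows "((f + g) * x)^Suc (m1 + m2) = 0"
proof -
  have "g * f = 0"
    using fg central(1) by simp
  have "(f * x) * (g * x) = f * (x * g) * x"
    by (simp add: mult.assoc)
  also have "\<dots> = (f * g) * (x * x)"
    by (simp only: central(2)[of x, symmetric] mult.assoc)
  finally have fxgx: "(f * x) * (g * x) = 0"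
    using fg by simp
  have "(g * x) * (f * x) = g * (x * f) * x"
    by (simp add: mult.assoc)
  also have "\<dots> = (g * f) * (x * x)"
    by (simp only: central(1)[of x, symmetric] mult.assoc)
  finally have "(g * x) * (f * x) = 0"
    using \<open>g * f = 0\<close> by simp
  with fxgx have "((f + g) * x)^Suc (m1 + m2) = (f * x)^Suc (m1 + m2) + (g * x)^Suc (m1 + m2)"
    using power_Suc_add_orthogonal by (simp add: distrib_right)
  also have "\<dots> = 0"
    using nilpotent_power_ge[OF assms(4), of "Suc (m1 + m2)"]
      nilpotent_power_ge[OF assms(5), of "Suc (m1 + m2)"] by simp
  finally show ?thesis .
qed

lemma basic_corner_orthogonal_sum:
  fixes f g :: 'a
  assumes fg: "f * g = 0" and central: "\<And>x. f * x = x * f" "\<And>x. g * x = x * g"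
    and "basic_corner f" "basic_corner g"
  shows "basic_corner (f + g)"
proof -
  have gf: "g * f = 0"
    using fg central(1)[of g] by simp
  obtain n1 \<phi>1 where hom1: "\<forall>i<(n1::nat). k_algebra_hom_to_field scale (\<phi>1 i) \<and> \<phi>1 i f = 1"
    and surj1: "\<forall>c. \<exists>x. \<forall>i<n1. \<phi>1 i x = c i"
    and ker1: "\<forall>x. (\<forall>i<n1. \<phi>1 i x = 0) \<longrightarrow> (\<exists>m. (f * x)^m = 0)"
    using \<open>basic_corner f\<close> unfolding basic_corner_def by blast
  obtain n2 \<phi>2 where hom2: "\<forall>i<(n2::nat). k_algebra_hom_to_field scale (\<phi>2 i) \<and> \<phi>2 i g = 1"
    and surj2: "\<forall>c. \<exists>x. \<forall>i<n2. \<phi>2 i x = c i"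
    and ker2: "\<forall>x. (\<forall>i<n2. \<phi>2 i x = 0) \<longrightarrow> (\<exists>m. (g * x)^m = 0)"
    using \<open>basic_corner g\<close> unfolding basic_corner_def by blast
  define \<phi> where "\<phi> i = (if i < n1 then \<phi>1 i else \<phi>2 (i - n1))" for i
  have combination: "\<phi> i (f * x + g * y) = (if i < n1 then \<phi>1 i x else \<phi>2 (i - n1) y)"
    if "i < n1 + n2" for i x y
  proof (cases "i < n1")
    case True
    then show ?thesis
      using hom1 character_orthogonal_combination(2)[OF _ _ fg] by (simp add: \<phi>_def)
  next
    case False
    then have "i - n1 < n2"
      using that by simp
    then show ?thesis
      using False hom2 character_orthogonal_combination(2)[OF _ _ gf, of _ y x]
      by (simp add: \<phi>_def add.commute)
  qed
  show ?thesis
    unfolding basic_corner_def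
  proof (rule exI[of _ "n1 + n2"], rule exI[of _ \<phi>], intro conjI allI impI)
    fix i assume "i < n1 + n2"
    then show "k_algebra_hom_to_field scale (\<phi> i)"
      using hom1 hom2 by (simp add: \<phi>_def)
    show "\<phi> i (f + g) = 1"
      using combination[OF \<open>i < n1 + n2\<close>, of 1 1] hom1 hom2 \<open>i < n1 + n2\<close>
      by (simp add: k_algebra_hom_to_field_def)
  next
    fix c :: "nat \<Rightarrow> 'k"
    obtain x1 where x1: "\<forall>i<n1. \<phi>1 i x1 = c i"
      using surj1 by blast
    obtain x2 where x2: "\<forall>i<n2. \<phi>2 i x2 = c (i + n1)"
      using spec[OF surj2, of "\<lambda>i. c (i + n1)"] by blast
    show "\<exists>x. \<forall>i<n1 + n2. \<phi> i x = c i"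
    proof (intro exI[of _ "f * x1 + g * x2"] allI impI)
      fix i assume "i < n1 + n2"
      then show "\<phi> i (f * x1 + g * x2) = c i"
        using combination x1 x2 by (cases "i < n1") simp_all
    qed
  next
    fix x assume kernel: "\<forall>i<n1 + n2. \<phi> i x = 0"
    have "\<phi>1 i x = 0" if "i < n1" for i
      using that kernel[rule_format, of i] by (simp add: \<phi>_def)
    then obtain m1 where "(f * x)^m1 = 0"
      using ker1 by blast
    have "\<phi>2 i x = 0" if "i < n2" for i
      using that kernel[rule_format, of "i + n1"] by (simp add: \<phi>_def)
    then obtain m2 where "(g * x)^m2 = 0"
      using ker2 by blast
    show "\<exists>m. ((f + g) * x)^m = 0"
      using nilpotent_orthogonal_sum[OF fg central \<open>(f * x)^m1 = 0\<close> \<open>(g * x)^m2 = 0\<close>] by blast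
  qed
qed

lemma subspace_range_mult: "subspace (range (\<lambda>x. a * x))"
  unfolding subspace_def
  by (auto simp: image_iff) (metis mult_zero_right, metis distrib_left, metis scale_mult_right)

lemma dim_range_mult_less:
  assumes e: "e * e = e" "\<And>x. e * x = x * e" and h: "h * h = h" "e * h = h" "h \<noteq> e"
  shows "dim (range (\<lambda>x. h * x)) < dim (range (\<lambda>x. e * x))"
proof -
  have "range (\<lambda>x. h * x) \<subseteq> range (\<lambda>x. e * x)"
  proof (rule image_subsetI)
    fix x
    have "e * (h * x) \<in> range (\<lambda>x. e * x)"
      by (rule rangeI)
    then show "h * x \<in> range (\<lambda>x. e * x)"
      using h(2) by (simp add: mult.assoc[symmetric])
  qed
  moreover have "e \<notin> range (\<lambda>x. h * x)"
  proof
    assume "e \<in> range (\<lambda>x. h * x)"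
    then obtain x where "e = h * x" by auto
    then have "h * e = e"
      using h(1) by (simp add: mult.assoc[symmetric])
    then show False
      using h e(2) by simp
  qed
  moreover have "e \<in> range (\<lambda>x. e * x)"
    using e(1) by (metis rangeI)
  ultimately have "range (\<lambda>x. h * x) \<subset> range (\<lambda>x. e * x)"
    by blast
  moreover have spans: "span (range (\<lambda>x. a * x)) = range (\<lambda>x. a * x)" for a
    using subspace_range_mult by (rule span_eq_iff[THEN iffD2])
  ultimately have "span (range (\<lambda>x. h * x)) \<subset> span (range (\<lambda>x. e * x))"
    by (simp only: spans)
  then show ?thesis
    by (rule dim_psubset)
qed

lemma basic_corner_idempotent:
  assumes alg_closed: "alg_closed_field TYPE('k)"
    and idempotent_central: "\<And>f x. f * f = (f::'a) \<Longrightarrow> f * x = x * f"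
  shows "e * e = e \<Longrightarrow> e \<noteq> 0 \<Longrightarrow> basic_corner e"
proof (induction "dim (range (\<lambda>x. e * x))" arbitrary: e rule: less_induct)
  case less
  show ?case
  proof (cases "\<exists>f. f * f = f \<and> e * f = f \<and> f \<noteq> 0 \<and> f \<noteq> e")
    case False
    have "local_corner scale Basis e"
      by (intro local_corner.intro fd_algebra_axioms local_corner_axioms.intro)
        (use alg_closed idempotent_central less.prems False in blast)+
    then interpret local_corner scale Basis e .
    show ?thesis by (rule basic_corner_primitive)
  next
    case True
    then obtain f where f: "f * f = f" "e * f = f" "f \<noteq> 0" "f \<noteq> e"
      by blast
    define g where "g = e - f"
    have ef: "f * e = f"
      using f(2) idempotent_central[OF f(1), of e] by simp
    have g: "g * g = g" "e * g = g" "g \<noteq> 0" "g \<noteq> e"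
      using less.prems f ef by (auto simp: g_def algebra_simps)
    have "f * g = 0"
      using f ef by (simp add: g_def algebra_simps)
    have "basic_corner f"
      using less.hyps[OF dim_range_mult_less[OF less.prems(1) idempotent_central[OF less.prems(1)]
          f(1,2,4)] f(1,3)] .
    moreover have "basic_corner g"
      using less.hyps[OF dim_range_mult_less[OF less.prems(1) idempotent_central[OF less.prems(1)]
          g(1,2,4)] g(1,3)] .
    ultimately have "basic_corner (f + g)"
      using basic_corner_orthogonal_sum \<open>f * g = 0\<close> idempotent_central f(1) g(1) by blast
    then show ?thesis
      by (simp add: g_def)
  qed
qed

lemma basic_algebra_if_idempotents_central:
  assumes "alg_closed_field TYPE('k)"
    and "\<And>f x. f * f = (f::'a) \<Longrightarrow> f * x = x * f"
  shows "basic_algebra scale"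
proof -
  obtain n \<phi> where hom: "\<And>i. i < (n::nat) \<Longrightarrow> k_algebra_hom_to_field scale (\<phi> i)"
    and surj: "\<forall>c. \<exists>x. \<forall>i<n. \<phi> i x = c i"
    and nil: "\<And>x. \<forall>i<n. \<phi> i x = 0 \<Longrightarrow> \<exists>m. x^m = 0"
    using basic_corner_idempotent[OF assms, of 1] unfolding basic_corner_def by auto
  define K where "K = {x. \<forall>i<n. \<phi> i x = 0}"
  have "K \<subseteq> jacobson_radical"
  proof (rule nil_left_ideal_subset_jacobson_radical)
    show "a * x \<in> K" if "x \<in> K" for a x
      using that hom unfolding K_def k_algebra_hom_to_field_def by simp
    show "\<exists>m. x^m = 0" if "x \<in> K" for x
      using that nil unfolding K_def by blast
  qed
  moreover have "jacobson_radical \<subseteq> K"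
    using maximal_left_ideal_character_kernel[OF hom]
    unfolding jacobson_radical_def K_def by blast
  ultimately show ?thesis
    unfolding basic_algebra_def K_def using hom surj
    by (intro exI[of _ n] exI[of _ \<phi>]) auto
qed

end

theorem mainTheorem1:
  fixes scale :: "'k::field \<Rightarrow> 'a::ring_1 \<Rightarrow> 'a"
  assumes "alg_closed_field TYPE('k)"
    and "fin_dim_k_algebra scale"
    and "\<not> has_nontrivial_grading scale"
  shows "basic_algebra scale"
proof -
  obtain Basis where "fd_algebra scale Basis"
    using fin_dim_k_algebra_imp_fd_algebra[OF assms(2)] .
  then interpret fd_algebra scale Basis .
  show ?thesis
    using basic_algebra_if_idempotents_central[OF assms(1)]
      idempotent_central_if_no_nontrivial_grading[OF assms(3)] by blast
qed

end
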